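(* Let $\varphi$ be a Boolean formula in 3-CNF and let $G$ be the graph constructed from $\varphi$ as described in the context. Let $X\subseteq V(G)$ be a minimum cluster deletion set of $G$. Then, for every variable gadget of $G$ (i.e., every $j\in\{1,\dots,n\}$), $X$ contains all vertices of one of the two sides $T_{1,j},T_{2,j}$.
   Context: Let $\varphi$ consist of clauses $C_1,\dots,C_m$ over variables $x_1,\dots,x_n$, each clause containing exactly three literals, $C_i=(L_i^1\vee L_i^2\vee L_i^3)$. The graph $G$ has vertex set $\{u_{r,s,i}: r\in\{1,2,3\}, s\in\{1,\dots,7\}, i\in\{1,\dots,m\}\}\cup\{v_{r,s,j}: r\in\{1,2\}, s\in\{1,2,3\}, j\in\{1,\dots,n\}\}$ and edge set consisting of: $\{u_{r,s,i},u_{r',s',i}\}$ for all $r\ne r'$ in $\{1,2,3\}$, all $s,s'\in\{1,\dots,7\}$, all $i$; $\{v_{1,s,j},v_{2,s',j}\}$ for all $s,s'\in\{1,2,3\}$, all $j$; $\{u_{r,s,i},v_{1,s',j}\}$ for all $s\in\{1,\dots,7\}$, $s'\in\{1,2,3\}$ whenever $L_i^r = x_j$; and $\{u_{r,s,i},v_{2,s',j}\}$ for all $s\in\{1,\dots,7\}$, $s'\in\{1,2,3\}$ whenever $L_i^r=\neg x_j$. The clause gadget of $C_i$ has sides $S_{r,i}=\{u_{r,s,i}: s\in\{1,\dots,7\}\}$, $r=1,2,3$; the variable gadget of $x_j$ is the complete bipartite graph on $\{v_{r,s,j}\}$ with sides $T_{r,j}=\{v_{r,s,j}: s\in\{1,2,3\}\}$,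 $r=1,2$. A cluster deletion set of $G$ is a set $X\subseteq V(G)$ such that $G-X$ contains no induced path on three vertices; it is minimum if it has the smallest possible size. *)

theory Defs
  imports Main
begin

text \<open>A 3-CNF formula with clauses C_1..C_m over variables x_1..x_n is given by
  L :: nat => nat => nat * bool, where L i r = (j, True) means L_i^r = x_j and
  L i r = (j, False) means L_i^r = not x_j (i in 1..m, r in 1..3).\<close>

definition wf_3cnf :: "nat \<Rightarrow> nat \<Rightarrow> (nat \<Rightarrow> nat \<Rightarrow> nat \<times> bool) \<Rightarrow> bool" where
  "wf_3cnf n m L \<longleftrightarrow> (\<forall>i\<in>{1..m}. \<forall>r\<in>{1..3}. fst (L i r) \<in> {1..n})"

datatype vtx = U nat nat nat | V nat nat nat

definition verts :: "nat \<Rightarrow> nat \<Rightarrow> vtx set" where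
  "verts n m =
     {U r s i | r s i. r \<in> {1..3} \<and> s \<in> {1..7} \<and> i \<in> {1..m}} \<union>
     {V r s j | r s j. r \<in> {1..2} \<and> s \<in> {1..3} \<and> j \<in> {1..n}}"

fun edge0 :: "nat \<Rightarrow> nat \<Rightarrow> (nat \<Rightarrow> nat \<Rightarrow> nat \<times> bool) \<Rightarrow> vtx \<Rightarrow> vtx \<Rightarrow> bool" where
  "edge0 n m L (U r s i) (U r' s' i') \<longleftrightarrow>
     r \<in> {1..3} \<and> r' \<in> {1..3} \<and> r \<noteq> r' \<and> s \<in> {1..7} \<and> s' \<in> {1..7} \<and> i \<in> {1..m} \<and> i' = i"
| "edge0 n m L (V r s j) (V r' s' j') \<longleftrightarrow>
     r = 1 \<and> r' = 2 \<and> s \<in> {1..3} \<and> s' \<in> {1..3} \<and> j \<in> {1..n} \<and> j' = j"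
| "edge0 n m L (U r s i) (V r' s' j) \<longleftrightarrow>
     r \<in> {1..3} \<and> s \<in> {1..7} \<and> i \<in> {1..m} \<and> s' \<in> {1..3} \<and> j \<in> {1..n} \<and>
     ((r' = 1 \<and> L i r = (j, True)) \<or> (r' = 2 \<and> L i r = (j, False)))"
| "edge0 n m L (V r s j) (U r' s' i) \<longleftrightarrow> False"

definition adj :: "nat \<Rightarrow> nat \<Rightarrow> (nat \<Rightarrow> nat \<Rightarrow> nat \<times> bool) \<Rightarrow> vtx \<Rightarrow> vtx \<Rightarrow> bool" where
  "adj n m L x y \<longleftrightarrow> edge0 n m L x y \<or> edge0 n m L y x"

definition cluster_deletion_set :: "'a set \<Rightarrow> ('a \<Rightarrow> 'a \<Rightarrow> bool) \<Rightarrow> 'a set \<Rightarrow> bool" where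
  "cluster_deletion_set Vs E X \<longleftrightarrow> X \<subseteq> Vs \<and>
     \<not> (\<exists>a b c. a \<in> Vs - X \<and> b \<in> Vs - X \<and> c \<in> Vs - X \<and> a \<noteq> c \<and>
            E a b \<and> E b c \<and> \<not> E a c)"

definition min_cluster_deletion_set :: "'a set \<Rightarrow> ('a \<Rightarrow> 'a \<Rightarrow> bool) \<Rightarrow> 'a set \<Rightarrow> bool" where
  "min_cluster_deletion_set Vs E X \<longleftrightarrow> cluster_deletion_set Vs E X \<and>
     (\<forall>Y. cluster_deletion_set Vs E Y \<longrightarrow> card X \<le> card Y)"

definition side_T :: "nat \<Rightarrow> nat \<Rightarrow> vtx set" where
  "side_T r j = {V r s j | s. s \<in> {1..3}}"

end

theory Submission
  imports Defs
begin

text \<open>Suppose a minimum cluster deletion set X keeps a vertex a of T_1j and a vertex b of T_2j.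
  Each other vertex of T_1j then lies in X, since with b and a it would form an induced P_3.
  Now put b into X and take the two vertices of T_1j - {a} out of it. They become isolated:
  their only surviving neighbours y would be neighbours of a, since the vertices of a side
  are twins, and not neighbours of b, so y, a, b would already have been an induced P_3 in G - X.
  The new set is a cluster deletion set that is smaller by one.\<close>

lemma cluster_deletion_set_mono:
  assumes "cluster_deletion_set Vs E X" and "X \<subseteq> Y" and "Y \<subseteq> Vs"
  shows "cluster_deletion_set Vs E Y"
  using assms unfolding cluster_deletion_set_def by blast

lemma cluster_deletion_set_hits_P3:
  assumes "cluster_deletion_set Vs E X"
    and "a \<in> Vs" "b \<in> Vs" "c \<in> Vs" "a \<noteq> c" "E a b" "E b c" "\<not> E a c"
  shows "a \<in> X \<or> b \<in> X \<or> c \<in> X"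
  using assms unfolding cluster_deletion_set_def by blast

lemma cluster_deletion_set_Diff_isolated:
  assumes "cluster_deletion_set Vs E X"
    and isolated: "\<And>x y. x \<in> D \<Longrightarrow> y \<in> Vs - (X - D) \<Longrightarrow> \<not> E x y \<and> \<not> E y x"
  shows "cluster_deletion_set Vs E (X - D)"
  unfolding cluster_deletion_set_def
proof (intro conjI notI)
  show "X - D \<subseteq> Vs"
    using assms(1) unfolding cluster_deletion_set_def by blast
next
  assume "\<exists>a b c. a \<in> Vs - (X - D) \<and> b \<in> Vs - (X - D) \<and> c \<in> Vs - (X - D) \<and> a \<noteq> c \<and>
            E a b \<and> E b c \<and> \<not> E a c"
  then obtain a b c where abc: "a \<in> Vs - (X - D)" "b \<in> Vs - (X - D)" "c \<in> Vs - (X - D)"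
      "a \<noteq> c" "E a b" "E b c" "\<not> E a c"
    by blast
  have "a \<notin> D" "b \<notin> D" "c \<notin> D"
    using isolated abc by blast+
  with abc have "a \<notin> X" "b \<notin> X" "c \<notin> X"
    by auto
  with cluster_deletion_set_hits_P3[OF assms(1)] abc show False
    by blast
qed

lemma finite_verts: "finite (verts n m)"
proof -
  have "verts n m = (\<lambda>(r, s, i). U r s i) ` ({1..3} \<times> {1..7} \<times> {1..m}) \<union>
                    (\<lambda>(r, s, j). V r s j) ` ({1..2} \<times> {1..3} \<times> {1..n})"
    unfolding verts_def by (auto simp: image_iff)
  then show ?thesis
    by simp
qed

lemma V_in_verts: "r \<in> {1..2} \<Longrightarrow> s \<in> {1..3} \<Longrightarrow> j \<in> {1..n} \<Longrightarrow> V r s j \<in> verts n m"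
  unfolding verts_def by blast

lemma card_side_T: "card (side_T r j) = 3"
proof -
  have "side_T r j = (\<lambda>s. V r s j) ` {1..3}"
    unfolding side_T_def by auto
  then show ?thesis
    by (simp add: card_image inj_on_def)
qed

lemma adj_V1_V2: "s \<in> {1..3} \<Longrightarrow> s' \<in> {1..3} \<Longrightarrow> j \<in> {1..n} \<Longrightarrow> adj n m L (V 1 s j) (V 2 s' j)"
  by (simp add: adj_def)

lemma not_adj_same_side: "\<not> adj n m L (V r s j) (V r s' j)"
  by (auto simp: adj_def)

lemma adj_side1_twins:
  assumes "adj n m L y (V 1 s j)" and "s' \<in> {1..3}"
  shows "adj n m L y (V 1 s' j) \<and> \<not> adj n m L y (V 2 s'' j)"
  using assms by (cases y) (auto simp: adj_def)

lemma side1_in_deletion_set: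
  assumes cds: "cluster_deletion_set (verts n m) (adj n m L) X"
    and j: "j \<in> {1..n}" and s1: "s1 \<in> {1..3}" and s2: "s2 \<in> {1..3}"
    and a: "V 1 s1 j \<notin> X" and b: "V 2 s2 j \<notin> X"
  shows "side_T 1 j - {V 1 s1 j} \<subseteq> X"
proof
  fix x
  assume "x \<in> side_T 1 j - {V 1 s1 j}"
  then obtain s where x: "x = V 1 s j" "s \<in> {1..3}" "s \<noteq> s1"
    unfolding side_T_def by blast
  have "adj n m L x (V 2 s2 j)" "adj n m L (V 2 s2 j) (V 1 s1 j)"
    using x j s1 s2 by (simp_all add: adj_V1_V2 adj_def)
  moreover have "x \<in> verts n m" "V 2 s2 j \<in> verts n m" "V 1 s1 j \<in> verts n m"
    using x j s1 s2 by (simp_all add: V_in_verts)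
  ultimately show "x \<in> X"
    using cluster_deletion_set_hits_P3[OF cds, of x "V 2 s2 j" "V 1 s1 j"] x a b
    by (auto simp: not_adj_same_side)
qed

lemma variable_gadget_swap:
  assumes cds: "cluster_deletion_set (verts n m) (adj n m L) X"
    and j: "j \<in> {1..n}" and s1: "s1 \<in> {1..3}" and s2: "s2 \<in> {1..3}"
    and a: "V 1 s1 j \<notin> X" and b: "V 2 s2 j \<notin> X"
  shows "cluster_deletion_set (verts n m) (adj n m L)
           (insert (V 2 s2 j) X - (side_T 1 j - {V 1 s1 j}))"
proof (rule cluster_deletion_set_Diff_isolated)
  show "cluster_deletion_set (verts n m) (adj n m L) (insert (V 2 s2 j) X)"
  proof (rule cluster_deletion_set_mono[OF cds])
    show "insert (V 2 s2 j) X \<subseteq> verts n m"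
      using cds j s2 V_in_verts[of 2 s2 j n m] unfolding cluster_deletion_set_def by simp
  qed auto
next
  fix x y
  assume x: "x \<in> side_T 1 j - {V 1 s1 j}"
    and y: "y \<in> verts n m - (insert (V 2 s2 j) X - (side_T 1 j - {V 1 s1 j}))"
  then obtain s where xs: "x = V 1 s j"
    unfolding side_T_def by blast
  show "\<not> adj n m L x y \<and> \<not> adj n m L y x"
  proof (cases "y \<in> side_T 1 j")
    case True
    then show ?thesis
      using xs not_adj_same_side unfolding side_T_def by blast
  next
    case False
    with y have y': "y \<in> verts n m" "y \<notin> X" "y \<noteq> V 2 s2 j"
      by auto
    have "\<not> adj n m L y x"
    proof
      assume "adj n m L y x"
      then have "adj n m L y (V 1 s1 j)" "\<not> adj n m L y (V 2 s2 j)"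
        using adj_side1_twins s1 xs by blast+
      moreover have "adj n m L (V 1 s1 j) (V 2 s2 j)"
        using s1 s2 j by (rule adj_V1_V2)
      ultimately show False
        using cluster_deletion_set_hits_P3[OF cds, of y "V 1 s1 j" "V 2 s2 j"] y' a b s1 s2 j
        by (simp add: V_in_verts)
    qed
    then show ?thesis
      by (simp add: adj_def)
  qed
qed

theorem lemma11:
  fixes n m :: nat and L :: "nat \<Rightarrow> nat \<Rightarrow> nat \<times> bool" and X :: "vtx set"
  assumes "wf_3cnf n m L"
    and "min_cluster_deletion_set (verts n m) (adj n m L) X"
  shows "\<forall>j\<in>{1..n}. side_T 1 j \<subseteq> X \<or> side_T 2 j \<subseteq> X"
proof (rule ccontr)
  assume "\<not> ?thesis"
  then obtain j s1 s2 where j: "j \<in> {1..n}" and s: "s1 \<in> {1..3}" "s2 \<in> {1..3}"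
    and ab: "V 1 s1 j \<notin> X" "V 2 s2 j \<notin> X"
    unfolding side_T_def by blast
  have cds: "cluster_deletion_set (verts n m) (adj n m L) X"
    and min: "\<And>Y. cluster_deletion_set (verts n m) (adj n m L) Y \<Longrightarrow> card X \<le> card Y"
    using assms(2) unfolding min_cluster_deletion_set_def by auto
  define D where "D = side_T 1 j - {V 1 s1 j}"
  have "finite X"
    using cds finite_verts finite_subset unfolding cluster_deletion_set_def by blast
  have "D \<subseteq> X"
    unfolding D_def by (rule side1_in_deletion_set[OF cds j s ab])
  have "card D = 2"
    using s card_side_T[of 1 j] unfolding D_def side_T_def by (simp add: card_Diff_singleton)
  have "card (insert (V 2 s2 j) X - D) = card (insert (V 2 s2 j) X) - card D"
    using \<open>D \<subseteq> X\<close> \<open>finite X\<close> by (intro card_Diff_subset) (auto intro: finite_subset)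
  also have "\<dots> < card X"
    using \<open>D \<subseteq> X\<close> \<open>card D = 2\<close> \<open>finite X\<close> ab(2) card_mono[of X D] by simp
  finally have "card (insert (V 2 s2 j) X - D) < card X" .
  moreover have "cluster_deletion_set (verts n m) (adj n m L) (insert (V 2 s2 j) X - D)"
    unfolding D_def by (rule variable_gadget_swap[OF cds j s ab])
  ultimately show False
    using min by fastforce
qed

end
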